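(* Let $\Gamma$ be a connected signed graph with $n$ vertices and $m$ edges, with Laplacian eigenvalues $\mu_1\ge\cdots\ge\mu_n\ge 0$. Let $p$ be a positive integer and $k\in\{p,p-1\}$. Then the adjacency spectrum of $S_p^k(\Gamma)$, as a multiset, is: if $\Gamma$ is balanced: $0$ with multiplicity $(p-1)n+(k+1)m+2$, together with $\pm\sqrt{(p+1)(k+1)\mu_i}$ for $i=1,\dots,n-1$; if $\Gamma$ is unbalanced: $0$ with multiplicity $(p-1)n+(k+1)m$, together with $\pm\sqrt{(p+1)(k+1)\mu_i}$ for $i=1,\dots,n$.
   Context: A signed graph $\Gamma=(G,\sigma)$ is a simple graph $G$ with a sign function $\sigma:E(G)\to\{1,-1\}$; its adjacency matrix $A(\Gamma)$ has $(i,j)$ entry $\sigma(v_iv_j)$ if $v_iv_j\in E(G)$ and $0$ otherwise, and its Laplacian matrix is $L(\Gamma)=D(G)-A(\Gamma)$ with $D(G)$ the diagonal degree matrix. $\Gamma$ is balanced if every cycle has an even number of negative edges, unbalanced otherwise. Orientation: for $\Gamma$ with vertices $v_1,\dots,v_n$ and edges $e_1,\dots,e_m$, fix $\vartheta(v,e)\in\{1,-1\}$ for each vertex $v$ incident with edge $e$, such that for every edge $e=vw$, $\vartheta(v,e)\vartheta(w,e)=-\sigma(e)$. The signed graph $S_p^k(\Gamma)$ (for integers $p\ge1$, $k\ge 0$): its vertex set is $\{v_i^{(s)}:1\le i\le n,\ 0\le s\le p\}\cup\{e_j^{(t)}:1\le j\le m,\ 0\le t\le k\}$; its edges are exactly the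 pairs $v_i^{(s)}e_j^{(t)}$ with $v_i$ an end of $e_j$ in $G$, of sign $\vartheta(v_i,e_j)$. Equivalently, starting from the signed subdivision graph $S(\Gamma)$, one adds $p$ copies of each original vertex $v_i$ joined to the neighbours of $v_i$ with the same signs, and then $k$ copies of each edge-vertex $e_j$ joined to all (old and new) neighbours of $e_j$ with the same signs. It has $(p+1)n+(k+1)m$ vertices and $2(p+1)(k+1)m$ edges. *)

theory Defs
  imports "Jordan_Normal_Form.Char_Poly" "HOL-Library.Multiset"
begin

text \<open>Signed graphs on the vertex set {0..<n}, with edges indexed by {0..<m}:
  edge j has end vertices ends j = (a, b) and sign sg j.\<close>

definition edge_set :: "(nat \<Rightarrow> nat \<times> nat) \<Rightarrow> nat \<Rightarrow> nat set" where
  "edge_set ends j = {fst (ends j), snd (ends j)}"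

definition signed_graph ::
  "nat \<Rightarrow> nat \<Rightarrow> (nat \<Rightarrow> nat \<times> nat) \<Rightarrow> (nat \<Rightarrow> real) \<Rightarrow> bool" where
  "signed_graph n m ends sg \<longleftrightarrow>
     (\<forall>j<m. fst (ends j) < n \<and> snd (ends j) < n \<and> fst (ends j) \<noteq> snd (ends j)
            \<and> (sg j = 1 \<or> sg j = -1))
   \<and> (\<forall>j<m. \<forall>j'<m. j \<noteq> j' \<longrightarrow> edge_set ends j \<noteq> edge_set ends j')"

definition adjacent :: "nat \<Rightarrow> (nat \<Rightarrow> nat \<times> nat) \<Rightarrow> nat \<Rightarrow> nat \<Rightarrow> bool" where
  "adjacent m ends u v \<longleftrightarrow> (\<exists>j<m. edge_set ends j = {u, v})"

definition connected_graph :: "nat \<Rightarrow> nat \<Rightarrow> (nat \<Rightarrow> nat \<times> nat) \<Rightarrow> bool" where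
  "connected_graph n m ends \<longleftrightarrow> n \<ge> 1 \<and>
     (\<forall>u<n. \<forall>v<n. (adjacent m ends)\<^sup>*\<^sup>* u v)"

definition is_cycle :: "nat \<Rightarrow> nat \<Rightarrow> (nat \<Rightarrow> nat \<times> nat) \<Rightarrow> nat list \<Rightarrow> nat list \<Rightarrow> bool" where
  "is_cycle n m ends vs es \<longleftrightarrow>
     length vs \<ge> 3 \<and> length es = length vs \<and> distinct vs \<and> distinct es
     \<and> set vs \<subseteq> {..<n} \<and> set es \<subseteq> {..<m}
     \<and> (\<forall>i<length vs. edge_set ends (es ! i) = {vs ! i, vs ! ((i + 1) mod length vs)})"

definition balanced :: "nat \<Rightarrow> nat \<Rightarrow> (nat \<Rightarrow> nat \<times> nat) \<Rightarrow> (nat \<Rightarrow> real) \<Rightarrow> bool" where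
  "balanced n m ends sg \<longleftrightarrow>
     (\<forall>vs es. is_cycle n m ends vs es \<longrightarrow> even (card {j \<in> set es. sg j = -1}))"

definition adj_matrix :: "nat \<Rightarrow> nat \<Rightarrow> (nat \<Rightarrow> nat \<times> nat) \<Rightarrow> (nat \<Rightarrow> real) \<Rightarrow> real mat" where
  "adj_matrix n m ends sg =
     mat n n (\<lambda>(u, v). \<Sum>j<m. if edge_set ends j = {u, v} then sg j else 0)"

definition degree :: "nat \<Rightarrow> (nat \<Rightarrow> nat \<times> nat) \<Rightarrow> nat \<Rightarrow> nat" where
  "degree m ends u = card {j. j < m \<and> u \<in> edge_set ends j}"

definition laplacian :: "nat \<Rightarrow> nat \<Rightarrow> (nat \<Rightarrow> nat \<times> nat) \<Rightarrow> (nat \<Rightarrow> real) \<Rightarrow> real mat" where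
  "laplacian n m ends sg =
     mat n n (\<lambda>(u, v). if u = v then real (degree m ends u) else 0) - adj_matrix n m ends sg"

definition orientation ::
  "nat \<Rightarrow> (nat \<Rightarrow> nat \<times> nat) \<Rightarrow> (nat \<Rightarrow> real) \<Rightarrow> (nat \<Rightarrow> nat \<Rightarrow> real) \<Rightarrow> bool" where
  "orientation m ends sg th \<longleftrightarrow>
     (\<forall>j<m. (th (fst (ends j)) j = 1 \<or> th (fst (ends j)) j = -1)
          \<and> (th (snd (ends j)) j = 1 \<or> th (snd (ends j)) j = -1)
          \<and> th (fst (ends j)) j * th (snd (ends j)) j = - sg j)"

text \<open>Vertex v_i^(s) (i<n, s\<le>p) has index s*n+i;
  edge-vertex e_j^(t) (j<m, t\<le>k) has index (p+1)*n + t*m + j.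
  v_i^(s) and e_j^(t) are adjacent iff i is an end of e_j, with sign th i j.\<close>
definition Spk_entry ::
  "nat \<Rightarrow> nat \<Rightarrow> (nat \<Rightarrow> nat \<times> nat) \<Rightarrow> (nat \<Rightarrow> nat \<Rightarrow> real) \<Rightarrow> nat \<Rightarrow> nat \<Rightarrow> nat \<Rightarrow> real" where
  "Spk_entry n m ends th p x y =
     (if x < (p+1)*n \<and> y \<ge> (p+1)*n then
        (let i = x mod n; j = (y - (p+1)*n) mod m in
          if i \<in> edge_set ends j then th i j else 0)
      else 0)"

definition Spk_adj ::
  "nat \<Rightarrow> nat \<Rightarrow> (nat \<Rightarrow> nat \<times> nat) \<Rightarrow> (nat \<Rightarrow> nat \<Rightarrow> real) \<Rightarrow> nat \<Rightarrow> nat \<Rightarrow> real mat" where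
  "Spk_adj n m ends th p k =
     mat ((p+1)*n + (k+1)*m) ((p+1)*n + (k+1)*m)
       (\<lambda>(x, y). Spk_entry n m ends th p x y + Spk_entry n m ends th p y x)"

definition spectrum_mset :: "real mat \<Rightarrow> real multiset \<Rightarrow> bool" where
  "spectrum_mset A M \<longleftrightarrow> char_poly A = (\<Prod>a\<in>#M. [:- a, 1:])"

end

(*
  With N the vertex-edge incidence matrix of \<Gamma> signed by the orientation, L(\<Gamma>) = N N\<^sup>T.
  S_p^k(\<Gamma>) is bipartite, and its biadjacency block B is N tiled p+1 times vertically and
  k+1 times horizontally.  The characteristic polynomial of a bipartite matrix is determined by
  that of B B\<^sup>T at x\<^sup>2, and B B\<^sup>T = X Y with Y X = (p+1)(k+1) L, so Sylvester's identity
  y^n det(y - X Y) = y^r det(y - Y X) yields the eigenvalues \<plusminus>sqrt((p+1)(k+1) \<mu>_i) besides 0.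
  If \<Gamma> is connected and balanced, the sign of a walk from vertex 0 depends only on its end
  (a closed walk splits into cycles); this switching function lies in the kernel of N\<^sup>T, so the
  least Laplacian eigenvalue \<mu>_n is 0.
*)

theory Submission
  imports Defs
begin

section \<open>Characteristic polynomials\<close>

lemma poly_eqI_nonzero:
  fixes p q :: "'a :: {idom, ring_char_0} poly"
  assumes "\<And>x. x \<noteq> 0 \<Longrightarrow> poly p x = poly q x"
  shows "p = q"
proof (rule ccontr)
  assume "p \<noteq> q"
  then have "finite {x. poly (p - q) x = 0}" by (intro poly_roots_finite) simp
  moreover have "UNIV - {0} \<subseteq> {x. poly (p - q) x = 0}" using assms by auto
  ultimately have "finite (UNIV - {0 :: 'a})" using finite_subset by blast
  then show False by (simp add: infinite_UNIV_char_0)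
qed

lemma poly_prod_mset_linear_factors:
  fixes x :: "'a :: comm_ring_1"
  shows "poly (\<Prod>a\<in>#mset xs. [:- a, 1:]) x = (\<Prod>i<length xs. x - xs ! i)"
proof (induction xs)
  case (Cons a xs)
  show ?case
    by (simp only: length_Cons prod.lessThan_Suc_shift) (simp add: Cons.IH algebra_simps)
qed simp

lemma poly_char_poly_eq_det:
  fixes A :: "'a :: field mat"
  assumes A: "A \<in> carrier_mat n n"
  shows "poly (char_poly A) x = det (x \<cdot>\<^sub>m 1\<^sub>m n - A)"
proof -
  have "- char_matrix A x = x \<cdot>\<^sub>m 1\<^sub>m n - A"
    unfolding char_matrix_def using A by (intro eq_matI) auto
  then show ?thesis using char_poly_matrix[OF A] by simp
qed

lemma poly_char_poly_smult:
  fixes L :: "'a :: field mat"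
  assumes L: "L \<in> carrier_mat n n" and char_L: "char_poly L = (\<Prod>a\<in>#mset mu. [:- a, 1:])"
    and len: "length mu = n" and c: "c \<noteq> 0"
  shows "poly (char_poly (c \<cdot>\<^sub>m L)) y = (\<Prod>i<n. y - c * mu ! i)"
proof -
  have "y \<cdot>\<^sub>m 1\<^sub>m n - c \<cdot>\<^sub>m L = c \<cdot>\<^sub>m ((y / c) \<cdot>\<^sub>m 1\<^sub>m n - L)"
    using L c by (intro eq_matI) (auto simp: field_simps)
  then have "poly (char_poly (c \<cdot>\<^sub>m L)) y = c ^ n * poly (char_poly L) (y / c)"
    using L by (simp add: poly_char_poly_eq_det[of _ n])
  also have "\<dots> = (\<Prod>i<n. c * (y / c - mu ! i))"
    unfolding char_L poly_prod_mset_linear_factors len by (simp add: prod.distrib)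
  also have "\<dots> = (\<Prod>i<n. y - c * mu ! i)"
    using c by (intro prod.cong refl) (simp add: field_simps)
  finally show ?thesis .
qed

text \<open>Sylvester's determinant identity: both sides equal det [[y I, Y], [X, I]], reduced by the
  column operations eliminating X and Y respectively.\<close>
lemma poly_char_poly_mult_commute:
  fixes X Y :: "'a :: field mat"
  assumes X: "X \<in> carrier_mat r n" and Y: "Y \<in> carrier_mat n r" and y: "y \<noteq> 0"
  shows "y ^ n * poly (char_poly (X * Y)) y = y ^ r * poly (char_poly (Y * X)) y"
proof -
  define M where "M = four_block_mat (y \<cdot>\<^sub>m 1\<^sub>m n) Y X (1\<^sub>m r)"
  have M: "M \<in> carrier_mat (n + r) (n + r)" unfolding M_def using X Y by auto
  define F1 where "F1 = four_block_mat (1\<^sub>m n) (0\<^sub>m n r) (- X) (1\<^sub>m r)"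
  have F1: "F1 \<in> carrier_mat (n + r) (n + r)" unfolding F1_def using X by auto
  have "M * F1 = four_block_mat (y \<cdot>\<^sub>m 1\<^sub>m n * 1\<^sub>m n + Y * - X) (y \<cdot>\<^sub>m 1\<^sub>m n * 0\<^sub>m n r + Y * 1\<^sub>m r)
      (X * 1\<^sub>m n + 1\<^sub>m r * - X) (X * 0\<^sub>m n r + 1\<^sub>m r * 1\<^sub>m r)"
    unfolding M_def F1_def by (rule mult_four_block_mat) (use X Y in auto)
  also have "\<dots> = four_block_mat (y \<cdot>\<^sub>m 1\<^sub>m n - Y * X) Y (0\<^sub>m r n) (1\<^sub>m r)"
    using X Y by (intro arg_cong4[where f = four_block_mat]; (rule eq_matI)?)
      (auto simp: mult_minus_distrib_mat)
  finally have "det (M * F1) = det (y \<cdot>\<^sub>m 1\<^sub>m n - Y * X)"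
    by (simp only:) (subst det_four_block_mat_lower_left_zero[of _ n _ r], use X Y in auto)
  moreover have "det F1 = 1"
    unfolding F1_def by (subst det_four_block_mat_upper_right_zero[of _ n _ r]) (use X in auto)
  ultimately have det_M_YX: "det M = det (y \<cdot>\<^sub>m 1\<^sub>m n - Y * X)"
    using det_mult[OF M F1] by simp
  define F2 where "F2 = four_block_mat (1\<^sub>m n) (- ((1 / y) \<cdot>\<^sub>m Y)) (0\<^sub>m r n) (1\<^sub>m r)"
  have F2: "F2 \<in> carrier_mat (n + r) (n + r)" unfolding F2_def using Y by auto
  have "M * F2 = four_block_mat (y \<cdot>\<^sub>m 1\<^sub>m n * 1\<^sub>m n + Y * 0\<^sub>m r n)
      (y \<cdot>\<^sub>m 1\<^sub>m n * - ((1 / y) \<cdot>\<^sub>m Y) + Y * 1\<^sub>m r)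
      (X * 1\<^sub>m n + 1\<^sub>m r * 0\<^sub>m r n) (X * - ((1 / y) \<cdot>\<^sub>m Y) + 1\<^sub>m r * 1\<^sub>m r)"
    unfolding M_def F2_def by (rule mult_four_block_mat) (use X Y in auto)
  also have "\<dots> = four_block_mat (y \<cdot>\<^sub>m 1\<^sub>m n) (0\<^sub>m n r) X ((1 / y) \<cdot>\<^sub>m (y \<cdot>\<^sub>m 1\<^sub>m r - X * Y))"
  proof -
    have "y \<cdot>\<^sub>m 1\<^sub>m n * - ((1 / y) \<cdot>\<^sub>m Y) = - Y"
      using Y y by (subst mult_smult_assoc_mat[of _ n n])
        (auto simp: mult_minus_distrib_mat mult_smult_distrib[of _ n n])
    then show ?thesis
      using X Y y by (intro arg_cong4[where f = four_block_mat]; (rule eq_matI)?)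
        (auto simp: mult_minus_distrib_mat scalar_prod_def sum_distrib_left field_simps)
  qed
  finally have "det (M * F2) = y ^ n * ((1 / y) ^ r * det (y \<cdot>\<^sub>m 1\<^sub>m r - X * Y))"
    by (simp only:) (subst det_four_block_mat_upper_right_zero[of _ n _ r], use X Y in auto)
  moreover have "det F2 = 1"
    unfolding F2_def by (subst det_four_block_mat_lower_left_zero[of _ n _ r]) (use Y in auto)
  ultimately have "det M = y ^ n * ((1 / y) ^ r * det (y \<cdot>\<^sub>m 1\<^sub>m r - X * Y))"
    using det_mult[OF M F2] by simp
  with det_M_YX y show ?thesis
    using X Y by (simp add: poly_char_poly_eq_det[of _ r] poly_char_poly_eq_det[of _ n]
        power_one_over field_simps)
qed

text \<open>A single column operation triangularizes x I - [[0, B], [C, 0]].\<close>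
lemma poly_char_poly_bipartite:
  fixes B C :: "'a :: field mat"
  assumes B: "B \<in> carrier_mat r s" and C: "C \<in> carrier_mat s r" and x: "x \<noteq> 0"
  shows "x ^ r * poly (char_poly (four_block_mat (0\<^sub>m r r) B C (0\<^sub>m s s))) x
     = x ^ s * poly (char_poly (B * C)) (x\<^sup>2)"
proof -
  define M where "M = four_block_mat (x \<cdot>\<^sub>m 1\<^sub>m r) (- B) (- C) (x \<cdot>\<^sub>m 1\<^sub>m s)"
  have "x \<cdot>\<^sub>m 1\<^sub>m (r + s) - four_block_mat (0\<^sub>m r r) B C (0\<^sub>m s s) = M"
    unfolding M_def using B C by (intro eq_matI) auto
  then have char_M: "poly (char_poly (four_block_mat (0\<^sub>m r r) B C (0\<^sub>m s s))) x = det M"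
    using B C by (simp add: poly_char_poly_eq_det[of _ "r + s"])
  have M: "M \<in> carrier_mat (r + s) (r + s)" unfolding M_def using B C by auto
  define F where "F = four_block_mat (1\<^sub>m r) (0\<^sub>m r s) ((1 / x) \<cdot>\<^sub>m C) (1\<^sub>m s)"
  have F: "F \<in> carrier_mat (r + s) (r + s)" unfolding F_def using C by auto
  have "M * F = four_block_mat (x \<cdot>\<^sub>m 1\<^sub>m r * 1\<^sub>m r + - B * ((1 / x) \<cdot>\<^sub>m C))
      (x \<cdot>\<^sub>m 1\<^sub>m r * 0\<^sub>m r s + - B * 1\<^sub>m s)
      (- C * 1\<^sub>m r + x \<cdot>\<^sub>m 1\<^sub>m s * ((1 / x) \<cdot>\<^sub>m C)) (- C * 0\<^sub>m r s + x \<cdot>\<^sub>m 1\<^sub>m s * 1\<^sub>m s)"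
    unfolding M_def F_def by (rule mult_four_block_mat) (use B C in auto)
  also have "\<dots> = four_block_mat ((1 / x) \<cdot>\<^sub>m (x\<^sup>2 \<cdot>\<^sub>m 1\<^sub>m r - B * C)) (- B) (0\<^sub>m s r) (x \<cdot>\<^sub>m 1\<^sub>m s)"
  proof -
    have "x \<cdot>\<^sub>m 1\<^sub>m s * ((1 / x) \<cdot>\<^sub>m C) = C"
      using C x by (subst mult_smult_assoc_mat[of _ s s]) (auto simp: mult_smult_distrib[of _ s s])
    moreover have "- B * ((1 / x) \<cdot>\<^sub>m C) = - ((1 / x) \<cdot>\<^sub>m (B * C))"
      using B C by (auto simp: mult_smult_distrib[of _ r s] mult_minus_distrib_mat)
    ultimately show ?thesis
      using B C x by (intro arg_cong4[where f = four_block_mat]; (rule eq_matI)?)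
        (auto simp: power2_eq_square field_simps)
  qed
  finally have "det (M * F) = (1 / x) ^ r * det (x\<^sup>2 \<cdot>\<^sub>m 1\<^sub>m r - B * C) * x ^ s"
    by (simp only:) (subst det_four_block_mat_lower_left_zero[of _ r _ s], use B C in auto)
  moreover have "det F = 1"
    unfolding F_def by (subst det_four_block_mat_upper_right_zero[of _ r _ s]) (use C in auto)
  ultimately show ?thesis
    using det_mult[OF M F] char_M x B C
    by (simp add: poly_char_poly_eq_det[of _ r] power_one_over field_simps)
qed

lemma eigenvalue_mult_transpose_nonneg:
  fixes N :: "real mat"
  assumes N: "N \<in> carrier_mat n m" and ev: "eigenvalue (N * N\<^sup>T) e"
  shows "e \<ge> 0"
proof -
  obtain v where v: "v \<in> carrier_vec n" "v \<noteq> 0\<^sub>v n" "N * N\<^sup>T *\<^sub>v v = e \<cdot>\<^sub>v v"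
    using ev N unfolding eigenvalue_def eigenvector_def by auto
  define w where "w = N\<^sup>T *\<^sub>v v"
  have "v \<bullet> (N * N\<^sup>T *\<^sub>v v) = v \<bullet> (N *\<^sub>v w)"
    unfolding w_def using N v by (subst assoc_mult_mat_vec[of _ n m _ n]) auto
  also have "\<dots> = w \<bullet> w"
    unfolding w_def by (rule transpose_vec_mult_scalar[symmetric, OF N _ v(1)]) (use N v in auto)
  finally have "e * (v \<bullet> v) \<ge> 0"
    using v conjugate_square_ge_0_vec[of w] by simp
  moreover have "v \<bullet> v > 0"
    using v conjugate_square_greater_0_vec[of v n] by simp
  ultimately show ?thesis by (simp add: zero_le_mult_iff)
qed

lemma spectrum_mset_pm_sqrtI:
  fixes A :: "real mat"
  assumes nonneg: "\<And>i. i < q \<Longrightarrow> c * mu ! i \<ge> 0"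
    and char_A: "\<And>x. x \<noteq> 0 \<Longrightarrow> poly (char_poly A) x = x ^ z * (\<Prod>i<q. x\<^sup>2 - c * mu ! i)"
  shows "spectrum_mset A (replicate_mset z 0 + mset (map (\<lambda>i. sqrt (c * mu ! i)) [0..<q])
    + mset (map (\<lambda>i. - sqrt (c * mu ! i)) [0..<q]))"
  unfolding spectrum_mset_def
proof (rule poly_eqI_nonzero)
  fix x :: real assume "x \<noteq> 0"
  have poly_factors: "poly (\<Prod>a\<in>#mset (map g [0..<q]). [:- a, 1:]) x = (\<Prod>i<q. x - g i)" for g
    unfolding poly_prod_mset_linear_factors by (intro prod.cong) auto
  have "(x - sqrt (c * mu ! i)) * (x - - sqrt (c * mu ! i)) = x\<^sup>2 - c * mu ! i" if "i < q" for i
    using nonneg[OF that] by (simp add: algebra_simps power2_eq_square)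
  then have "(\<Prod>i<q. x - sqrt (c * mu ! i)) * (\<Prod>i<q. x - - sqrt (c * mu ! i))
      = (\<Prod>i<q. x\<^sup>2 - c * mu ! i)"
    by (simp add: prod.distrib[symmetric])
  then show "poly (char_poly A) x = poly (\<Prod>a\<in>#replicate_mset z 0
      + mset (map (\<lambda>i. sqrt (c * mu ! i)) [0..<q])
      + mset (map (\<lambda>i. - sqrt (c * mu ! i)) [0..<q]). [:- a, 1:]) x"
    using char_A[OF \<open>x \<noteq> 0\<close>]
    by (simp only: image_mset_union prod_mset.union poly_mult poly_factors) simp
qed

section \<open>Incidence matrix and Laplacian of a signed graph\<close>

definition incidence_mat ::
  "nat \<Rightarrow> nat \<Rightarrow> (nat \<Rightarrow> nat \<times> nat) \<Rightarrow> (nat \<Rightarrow> nat \<Rightarrow> real) \<Rightarrow> real mat" where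
  "incidence_mat n m ends th = mat n m (\<lambda>(i, j). if i \<in> edge_set ends j then th i j else 0)"

lemma incidence_entries_mult:
  assumes sg: "signed_graph n m ends sg" and th: "orientation m ends sg th" and j: "j < m"
  shows "(if u \<in> edge_set ends j then th u j else 0) * (if v \<in> edge_set ends j then th v j else 0)
     = (if u = v \<and> u \<in> edge_set ends j then 1 else 0) - (if edge_set ends j = {u, v} then sg j else 0)"
proof -
  from sg j have loopless: "fst (ends j) \<noteq> snd (ends j)"
    unfolding signed_graph_def by auto
  from th j have "th (fst (ends j)) j = 1 \<or> th (fst (ends j)) j = -1"
    and "th (snd (ends j)) j = 1 \<or> th (snd (ends j)) j = -1"
    and th_sg: "th (fst (ends j)) j * th (snd (ends j)) j = - sg j"
    unfolding orientation_def by auto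
  then have "u \<in> edge_set ends j \<Longrightarrow> th u j * th u j = 1"
    unfolding edge_set_def by auto
  moreover have "u \<noteq> v \<Longrightarrow> (u \<in> edge_set ends j \<and> v \<in> edge_set ends j) = (edge_set ends j = {u, v})"
    unfolding edge_set_def by auto
  moreover have "u \<noteq> v \<Longrightarrow> u \<in> edge_set ends j \<Longrightarrow> v \<in> edge_set ends j \<Longrightarrow> th u j * th v j = - sg j"
    using th_sg unfolding edge_set_def by (auto simp: mult.commute)
  moreover have "edge_set ends j \<noteq> {u, u}"
    using loopless unfolding edge_set_def by (auto simp: doubleton_eq_iff)
  ultimately show ?thesis by auto
qed

lemma laplacian_eq_incidence_mult_transpose:
  assumes sg: "signed_graph n m ends sg" and th: "orientation m ends sg th"
  shows "laplacian n m ends sg = incidence_mat n m ends th * (incidence_mat n m ends th)\<^sup>T"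
proof (rule eq_matI)
  fix u v assume "u < dim_row (incidence_mat n m ends th * (incidence_mat n m ends th)\<^sup>T)"
    and "v < dim_col (incidence_mat n m ends th * (incidence_mat n m ends th)\<^sup>T)"
  then have u: "u < n" and v: "v < n" by (auto simp: incidence_mat_def)
  have "(incidence_mat n m ends th * (incidence_mat n m ends th)\<^sup>T) $$ (u, v)
     = (\<Sum>j<m. (if u \<in> edge_set ends j then th u j else 0) * (if v \<in> edge_set ends j then th v j else 0))"
    using u v by (simp add: incidence_mat_def scalar_prod_def lessThan_atLeast0)
  also have "\<dots> = (\<Sum>j<m. if u = v \<and> u \<in> edge_set ends j then 1 else 0)
      - (\<Sum>j<m. if edge_set ends j = {u, v} then sg j else 0)"
    by (simp add: incidence_entries_mult[OF sg th] sum_subtractf)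
  also have "(\<Sum>j<m. if u = v \<and> u \<in> edge_set ends j then 1 else 0)
      = (if u = v then real (degree m ends u) else 0)"
    by (auto simp: degree_def sum.If_cases Int_def conj_commute)
  finally show "laplacian n m ends sg $$ (u, v)
      = (incidence_mat n m ends th * (incidence_mat n m ends th)\<^sup>T) $$ (u, v)"
    using u v by (simp add: laplacian_def adj_matrix_def)
qed (auto simp: laplacian_def adj_matrix_def incidence_mat_def)

lemma laplacian_spectrum_nonneg:
  assumes sg: "signed_graph n m ends sg" and th: "orientation m ends sg th"
    and spec: "spectrum_mset (laplacian n m ends sg) (mset mu)" and i: "i < length mu"
  shows "mu ! i \<ge> 0"
proof -
  define N where "N = incidence_mat n m ends th"
  have N: "N \<in> carrier_mat n m" by (simp add: N_def incidence_mat_def)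
  have "poly (char_poly (laplacian n m ends sg)) (mu ! i) = (\<Prod>j<length mu. mu ! i - mu ! j)"
    using spec unfolding spectrum_mset_def by (simp add: poly_prod_mset_linear_factors)
  also have "\<dots> = 0" using i by (intro prod_zero) auto
  finally have "poly (char_poly (N * N\<^sup>T)) (mu ! i) = 0"
    unfolding N_def laplacian_eq_incidence_mult_transpose[OF sg th] .
  then have "eigenvalue (N * N\<^sup>T) (mu ! i)"
    using N by (simp add: eigenvalue_root_char_poly[of _ n])
  then show ?thesis by (rule eigenvalue_mult_transpose_nonneg[OF N])
qed

section \<open>Walks and switching functions\<close>

definition is_walk ::
  "nat \<Rightarrow> (nat \<Rightarrow> nat \<times> nat) \<Rightarrow> (nat \<Rightarrow> nat) \<Rightarrow> (nat \<Rightarrow> nat) \<Rightarrow> nat \<Rightarrow> bool" where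
  "is_walk m ends f g l \<longleftrightarrow> (\<forall>t<l. g t < m \<and> edge_set ends (g t) = {f t, f (Suc t)})"

lemma is_walk_snoc:
  assumes "is_walk m ends f g l" and "j < m" and "edge_set ends j = {f l, u}"
  shows "is_walk m ends (f(Suc l := u)) (g(l := j)) (Suc l)"
  using assms unfolding is_walk_def by (auto simp: less_Suc_eq)

lemma connected_walk_from_0:
  assumes con: "connected_graph n m ends" and v: "v < n"
  obtains f g l where "is_walk m ends f g l" "f 0 = 0" "f l = v"
proof -
  have "(adjacent m ends)\<^sup>*\<^sup>* 0 v" using con v unfolding connected_graph_def by auto
  then have "\<exists>f g l. is_walk m ends f g l \<and> f 0 = 0 \<and> f l = v"
  proof (induction rule: rtranclp_induct)
    case base
    have "is_walk m ends (\<lambda>_. 0) g 0" for g by (simp add: is_walk_def)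
    then show ?case by blast
  next
    case (step w u)
    then obtain f g l where walk: "is_walk m ends f g l" "f 0 = 0" "f l = w" by blast
    from step(2) obtain j where "j < m" "edge_set ends j = {w, u}" unfolding adjacent_def by blast
    with walk have "is_walk m ends (f(Suc l := u)) (g(l := j)) (Suc l)" by (intro is_walk_snoc) auto
    then show ?case using walk by fastforce
  qed
  then show ?thesis using that by blast
qed

lemma walk_sign_squared:
  assumes sg: "signed_graph n m ends sg" and walk: "is_walk m ends f g l"
  shows "(\<Prod>t<l. sg (g t))\<^sup>2 = 1"
proof -
  have "sg (g t) = 1 \<or> sg (g t) = -1" if "t < l" for t
    using sg walk that unfolding signed_graph_def is_walk_def by auto
  then have "(\<Prod>t<l. (sg (g t))\<^sup>2) = 1" by (intro prod.neutral) (simp add: power2_eq_1_iff)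
  then show ?thesis by (simp add: prod_power_distrib)
qed

lemma prod_signs_eq_neg_one_power:
  fixes s :: "'a \<Rightarrow> real"
  assumes "finite S" and "\<And>j. j \<in> S \<Longrightarrow> s j = 1 \<or> s j = -1"
  shows "(\<Prod>j\<in>S. s j) = (-1) ^ card {j \<in> S. s j = -1}"
  using assms
proof (induction S rule: finite_induct)
  case (insert x F)
  then have "finite {j \<in> F. s j = -1}" "x \<notin> {j \<in> F. s j = -1}" by auto
  moreover have "{j \<in> insert x F. s j = -1}
      = (if s x = -1 then insert x {j \<in> F. s j = -1} else {j \<in> F. s j = -1})"
    by auto
  ultimately show ?case using insert by auto
qed simp

lemma closed_walk_decompose:
  assumes walk: "is_walk m ends f g l" and closed: "f 0 = f l"
    and ij: "i < j" "j \<le> l" "f i = f j" "\<not> (i = 0 \<and> j = l)"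
  obtains f1 g1 l1 f2 g2 l2 where "is_walk m ends f1 g1 l1" "f1 0 = f1 l1" "l1 < l"
    and "is_walk m ends f2 g2 l2" "f2 0 = f2 l2" "l2 < l"
    and "(\<Prod>t<l. s (g t)) = (\<Prod>t<l1. s (g1 t)) * (\<Prod>t<l2. s (g2 t))"
proof -
  define d where "d = j - i"
  define f2 where "f2 t = (if t \<le> i then f t else f (t + d))" for t
  define g2 where "g2 t = (if t < i then g t else g (t + d))" for t
  have d: "0 < d" "i + d = j" "d < l" using ij by (auto simp: d_def)
  have loop: "is_walk m ends (\<lambda>t. f (i + t)) (\<lambda>t. g (i + t)) d"
    using walk d ij unfolding is_walk_def by (auto simp: add.commute)
  have rest: "is_walk m ends f2 g2 (l - d)"
    using walk ij d unfolding is_walk_def f2_def g2_def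
    by (auto simp: not_less not_le le_Suc_eq Suc_le_eq)
  have "f2 0 = f2 (l - d)"
  proof (cases "l - d \<le> i")
    case True
    then have "l - d = i" "j = l" using d ij by auto
    then show ?thesis using closed ij by (simp add: f2_def)
  qed (use closed d in \<open>simp add: f2_def\<close>)
  moreover have "(\<Prod>t<l. s (g t)) = (\<Prod>t<d. s (g (i + t))) * (\<Prod>t<l - d. s (g2 t))"
  proof -
    have "(\<Prod>t<l. s (g t))
        = (\<Prod>t\<in>{0..<i}. s (g t)) * (\<Prod>t\<in>{i..<j}. s (g t)) * (\<Prod>t\<in>{j..<l}. s (g t))"
      using ij by (simp add: lessThan_atLeast0 prod.atLeastLessThan_concat)
    moreover have "(\<Prod>t\<in>{i..<j}. s (g t)) = (\<Prod>t<d. s (g (i + t)))"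
      using prod.shift_bounds_nat_ivl[of "\<lambda>t. s (g t)" 0 i d] d
      by (simp add: lessThan_atLeast0 add.commute)
    moreover have "(\<Prod>t<l - d. s (g2 t)) = (\<Prod>t\<in>{0..<i}. s (g t)) * (\<Prod>t\<in>{j..<l}. s (g t))"
    proof -
      have "(\<Prod>t<l - d. s (g2 t)) = (\<Prod>t\<in>{0..<i}. s (g2 t)) * (\<Prod>t\<in>{i..<l - d}. s (g2 t))"
        using ij d by (simp add: lessThan_atLeast0 prod.atLeastLessThan_concat)
      also have "(\<Prod>t\<in>{i..<l - d}. s (g2 t)) = (\<Prod>t\<in>{i..<l - d}. s (g (t + d)))"
        by (rule prod.cong) (auto simp: g2_def)
      also have "\<dots> = (\<Prod>t\<in>{j..<l}. s (g t))"
        using prod.shift_bounds_nat_ivl[of "\<lambda>t. s (g t)" i d "l - d"] d ij by simp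
      finally show ?thesis by (simp add: g2_def)
    qed
    ultimately show ?thesis by (simp add: mult_ac)
  qed
  ultimately show ?thesis
    using that[OF loop _ _ rest] d ij by auto
qed

lemma simple_closed_walk_is_cycle:
  assumes sg: "signed_graph n m ends sg" and walk: "is_walk m ends f g l"
    and closed: "f 0 = f l" and l: "3 \<le> l"
    and simple: "\<And>i j. i < j \<Longrightarrow> j \<le> l \<Longrightarrow> f i = f j \<Longrightarrow> i = 0 \<and> j = l"
  shows "is_cycle n m ends (map f [0..<l]) (map g [0..<l])"
proof -
  have edge: "g t < m" "edge_set ends (g t) = {f t, f (Suc t)}" if "t < l" for t
    using walk that unfolding is_walk_def by auto
  have inj_f: "inj_on f {0..<l}"
    using simple by (intro inj_onI) (metis atLeastLessThan_iff less_imp_le linorder_neqE_nat)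
  have "g a \<noteq> g b" if ab: "a < b" "b < l" for a b
  proof
    assume "g a = g b"
    then have "{f a, f (Suc a)} = {f b, f (Suc b)}" using edge(2)[of a] edge(2)[of b] ab by simp
    moreover have "f a \<noteq> f b" using inj_f ab by (auto dest: inj_onD)
    ultimately have swap: "f a = f (Suc b)" "f (Suc a) = f b" by (auto simp: doubleton_eq_iff)
    show False
    proof (cases "Suc b < l")
      case True
      then show False using inj_f swap ab by (auto dest: inj_onD)
    next
      case False
      then have "Suc b = l" using ab by simp
      then have "a = 0" using inj_onD[OF inj_f, of a 0] swap closed ab by simp
      then show False using inj_onD[OF inj_f, of 1 b] swap ab \<open>Suc b = l\<close> l by simp
    qed
  qed
  then have inj_g: "inj_on g {0..<l}"
    by (intro inj_onI) (metis atLeastLessThan_iff linorder_neqE_nat)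
  have "set (map f [0..<l]) \<subseteq> {..<n}"
  proof
    fix v assume "v \<in> set (map f [0..<l])"
    then obtain t where t: "t < l" "v = f t" by auto
    then have "v \<in> edge_set ends (g t)" using edge(2) by simp
    with sg edge(1)[OF t(1)] show "v \<in> {..<n}" unfolding signed_graph_def edge_set_def by auto
  qed
  moreover have "edge_set ends (g i) = {f i, f ((i + 1) mod l)}" if "i < l" for i
    using edge(2)[OF that] closed that by (cases "Suc i = l") auto
  ultimately show ?thesis
    unfolding is_cycle_def using l inj_f inj_g edge(1) by (auto simp: distinct_map)
qed

lemma balanced_simple_closed_walk_sign:
  assumes sg: "signed_graph n m ends sg" and bal: "balanced n m ends sg"
    and walk: "is_walk m ends f g l" and closed: "f 0 = f l"
    and simple: "\<And>i j. i < j \<Longrightarrow> j \<le> l \<Longrightarrow> f i = f j \<Longrightarrow> i = 0 \<and> j = l"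
  shows "(\<Prod>t<l. sg (g t)) = 1"
proof -
  have edge: "g t < m" "edge_set ends (g t) = {f t, f (Suc t)}" if "t < l" for t
    using walk that unfolding is_walk_def by auto
  have edge_ok: "fst (ends j) \<noteq> snd (ends j)" "sg j = 1 \<or> sg j = -1"
    and edge_inj: "\<And>j'. j' < m \<Longrightarrow> edge_set ends j = edge_set ends j' \<Longrightarrow> j = j'" if "j < m" for j
    using sg that unfolding signed_graph_def by auto
  have sign: "sg (g t) = 1 \<or> sg (g t) = -1" if "t < l" for t
    using edge_ok(2)[OF edge(1)[OF that]] .
  consider "l = 0" | "l = 1" | "l = 2" | "3 \<le> l" by linarith
  then show ?thesis
  proof cases
    case 2
    then have "edge_set ends (g 0) = {f 0}" using edge closed by auto
    then show ?thesis using edge_ok(1)[OF edge(1)] 2 unfolding edge_set_def by auto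
  next
    case 3
    then have "edge_set ends (g 0) = edge_set ends (g 1)" using edge closed
      by (auto simp: numeral_2_eq_2 insert_commute)
    then have "g 0 = g 1" using 3 edge(1)[of 0] edge(1)[of 1] edge_inj[of "g 0" "g 1"] by simp
    then show ?thesis using sign[of 1] 3 by (auto simp: numeral_2_eq_2)
  next
    case 4
    define es where "es = map g [0..<l]"
    have cycle: "is_cycle n m ends (map f [0..<l]) es"
      unfolding es_def by (rule simple_closed_walk_is_cycle[OF sg walk closed 4 simple])
    then have "inj_on g {0..<l}"
      unfolding es_def is_cycle_def by (simp add: distinct_map)
    then have "(\<Prod>t<l. sg (g t)) = (\<Prod>j\<in>set es. sg j)"
      using prod.reindex[of g "{0..<l}" sg] by (simp add: es_def lessThan_atLeast0)
    also have "\<dots> = (-1) ^ card {j \<in> set es. sg j = -1}"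
      by (rule prod_signs_eq_neg_one_power) (auto simp: es_def dest: sign)
    also have "\<dots> = 1"
      using cycle bal unfolding balanced_def by simp
    finally show ?thesis .
  qed simp
qed

lemma balanced_closed_walk_sign:
  assumes sg: "signed_graph n m ends sg" and bal: "balanced n m ends sg"
  shows "is_walk m ends f g l \<Longrightarrow> f 0 = f l \<Longrightarrow> (\<Prod>t<l. sg (g t)) = 1"
proof (induction l arbitrary: f g rule: less_induct)
  case (less l)
  show ?case
  proof (cases "\<exists>i j. i < j \<and> j \<le> l \<and> f i = f j \<and> \<not> (i = 0 \<and> j = l)")
    case True
    then obtain i j where "i < j" "j \<le> l" "f i = f j" "\<not> (i = 0 \<and> j = l)" by blast
    then obtain f1 g1 l1 f2 g2 l2 where parts: "is_walk m ends f1 g1 l1" "f1 0 = f1 l1" "l1 < l"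
      "is_walk m ends f2 g2 l2" "f2 0 = f2 l2" "l2 < l"
      and "(\<Prod>t<l. sg (g t)) = (\<Prod>t<l1. sg (g1 t)) * (\<Prod>t<l2. sg (g2 t))"
      by (rule closed_walk_decompose[OF less.prems, where s = sg])
    with less.IH[OF parts(3,1,2)] less.IH[OF parts(6,4,5)] show ?thesis by simp
  next
    case False
    then show ?thesis
      using balanced_simple_closed_walk_sign[OF sg bal less.prems] by blast
  qed
qed

lemma walk_append_reverse:
  assumes walk1: "is_walk m ends f1 g1 l1" and walk2: "is_walk m ends f2 g2 l2"
    and meet: "f1 l1 = f2 l2"
  defines "f \<equiv> \<lambda>t. if t \<le> l1 then f1 t else f2 (l1 + l2 - t)"
    and "g \<equiv> \<lambda>t. if t < l1 then g1 t else g2 (l1 + l2 - Suc t)"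
  shows "is_walk m ends f g (l1 + l2)" and "f 0 = f1 0" and "f (l1 + l2) = f2 0"
    and "(\<Prod>t<l1 + l2. s (g t)) = (\<Prod>t<l1. s (g1 t)) * (\<Prod>t<l2. s (g2 t))"
proof -
  show "is_walk m ends f g (l1 + l2)"
    unfolding is_walk_def
  proof (intro allI impI)
    fix t assume t: "t < l1 + l2"
    show "g t < m \<and> edge_set ends (g t) = {f t, f (Suc t)}"
    proof (cases "t < l1")
      case False
      define u where "u = l1 + l2 - Suc t"
      have u: "u < l2" "Suc u = l1 + l2 - t" using t False by (auto simp: u_def)
      then have "f t = f2 (Suc u)" "f (Suc t) = f2 u" "g t = g2 u"
        using meet False by (auto simp: f_def g_def u_def le_Suc_eq)
      then show ?thesis using walk2 u unfolding is_walk_def by (auto simp: insert_commute)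
    qed (use walk1 in \<open>auto simp: is_walk_def f_def g_def\<close>)
  qed
  show "f 0 = f1 0" "f (l1 + l2) = f2 0"
    using meet by (auto simp: f_def)
  have "(\<Prod>t<l1 + l2. s (g t)) = (\<Prod>t<l1. s (g t)) * (\<Prod>t\<in>{l1..<l1 + l2}. s (g t))"
    by (simp add: lessThan_atLeast0 prod.atLeastLessThan_concat)
  also have "(\<Prod>t\<in>{l1..<l1 + l2}. s (g t)) = (\<Prod>u<l2. s (g (u + l1)))"
    using prod.shift_bounds_nat_ivl[of "\<lambda>t. s (g t)" 0 l1 l2] by (simp add: lessThan_atLeast0 add.commute)
  also have "(\<Prod>t<l1. s (g t)) = (\<Prod>t<l1. s (g1 t))"
    by (rule prod.cong) (auto simp: g_def)
  also have "(\<Prod>u<l2. s (g (u + l1))) = (\<Prod>u<l2. s (g2 (l2 - Suc u)))"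
    by (rule prod.cong) (auto simp: g_def)
  also have "\<dots> = (\<Prod>u<l2. s (g2 u))"
    by (rule prod.nat_diff_reindex)
  finally show "(\<Prod>t<l1 + l2. s (g t)) = (\<Prod>t<l1. s (g1 t)) * (\<Prod>t<l2. s (g2 t))" .
qed

lemma balanced_walk_sign_unique:
  assumes sg: "signed_graph n m ends sg" and bal: "balanced n m ends sg"
    and walk1: "is_walk m ends f1 g1 l1" "f1 0 = u" "f1 l1 = v"
    and walk2: "is_walk m ends f2 g2 l2" "f2 0 = u" "f2 l2 = v"
  shows "(\<Prod>t<l1. sg (g1 t)) = (\<Prod>t<l2. sg (g2 t))"
proof -
  have meet: "f1 l1 = f2 l2" using walk1 walk2 by simp
  have "(\<Prod>t<l1 + l2. sg (if t < l1 then g1 t else g2 (l1 + l2 - Suc t))) = 1"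
    using balanced_closed_walk_sign[OF sg bal walk_append_reverse(1)[OF walk1(1) walk2(1) meet]]
      walk_append_reverse(2,3)[OF walk1(1) walk2(1) meet] walk1(2) walk2(2) by simp
  then have "(\<Prod>t<l1. sg (g1 t)) * (\<Prod>t<l2. sg (g2 t)) = 1" (is "?w1 * ?w2 = 1")
    using walk_append_reverse(4)[OF walk1(1) walk2(1) meet, where s = sg] by simp
  moreover have "?w2 * ?w2 = 1"
    using walk_sign_squared[OF sg walk2(1)] by (simp add: power2_eq_square)
  ultimately have "?w1 * (?w2 * ?w2) = ?w2"
    by (metis mult.assoc mult_1)
  with \<open>?w2 * ?w2 = 1\<close> show ?thesis by simp
qed

lemma balanced_switching_function:
  assumes sg: "signed_graph n m ends sg" and con: "connected_graph n m ends"
    and bal: "balanced n m ends sg"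
  obtains x where "\<And>v. v < n \<Longrightarrow> x v = 1 \<or> x v = -1"
    and "\<And>j. j < m \<Longrightarrow> x (fst (ends j)) * x (snd (ends j)) = sg j"
proof -
  define x where
    "x v = (SOME s. \<exists>f g l. is_walk m ends f g l \<and> f 0 = 0 \<and> f l = v \<and> s = (\<Prod>t<l. sg (g t)))" for v
  have x_walk: "x v = (\<Prod>t<l. sg (g t))" if walk: "is_walk m ends f g l" "f 0 = 0" "f l = v" for v f g l
  proof -
    have "\<exists>f' g' l'. is_walk m ends f' g' l' \<and> f' 0 = 0 \<and> f' l' = v \<and> x v = (\<Prod>t<l'. sg (g' t))"
      unfolding x_def by (rule someI_ex) (use walk in blast)
    then show ?thesis using balanced_walk_sign_unique[OF sg bal walk] by metis
  qed
  have x_sign: "x v = 1 \<or> x v = -1" if "v < n" for v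
  proof -
    obtain f g l where walk: "is_walk m ends f g l" "f 0 = 0" "f l = v"
      using connected_walk_from_0[OF con \<open>v < n\<close>] by blast
    show ?thesis using x_walk[OF walk] walk_sign_squared[OF sg walk(1)] by (simp add: power2_eq_1_iff)
  qed
  have "x (fst (ends j)) * x (snd (ends j)) = sg j" if j: "j < m" for j
  proof -
    define a b where "a = fst (ends j)" and "b = snd (ends j)"
    have ab: "a < n" "edge_set ends j = {a, b}"
      using sg j unfolding signed_graph_def edge_set_def a_def b_def by auto
    obtain f g l where walk: "is_walk m ends f g l" "f 0 = 0" "f l = a"
      using connected_walk_from_0[OF con ab(1)] by blast
    have "is_walk m ends (f(Suc l := b)) (g(l := j)) (Suc l)"
      using walk ab j by (intro is_walk_snoc) auto
    then have "x b = x a * sg j"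
      using x_walk[of "f(Suc l := b)" "g(l := j)" "Suc l" b] x_walk[OF walk] walk by simp
    moreover have "x a * x a = 1" using x_sign[OF ab(1)] by auto
    ultimately show ?thesis unfolding a_def b_def by (metis mult.assoc mult_1)
  qed
  with x_sign that show ?thesis by blast
qed

lemma incidence_transpose_switching_kernel:
  assumes sg: "signed_graph n m ends sg" and th: "orientation m ends sg th"
    and x_sign: "\<And>v. v < n \<Longrightarrow> x v = 1 \<or> x v = -1"
    and x_switch: "\<And>j. j < m \<Longrightarrow> x (fst (ends j)) * x (snd (ends j)) = sg j"
  shows "(incidence_mat n m ends th)\<^sup>T *\<^sub>v vec n x = 0\<^sub>v m"
proof (rule eq_vecI)
  fix j assume "j < dim_vec (0\<^sub>v m :: real vec)"
  then have j: "j < m" by simp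
  define a b where "a = fst (ends j)" and "b = snd (ends j)"
  from sg j have ab: "a < n" "b < n" "a \<noteq> b" "sg j = 1 \<or> sg j = -1"
    unfolding signed_graph_def a_def b_def by auto
  from th j have "th a j = 1 \<or> th a j = -1" "th b j = 1 \<or> th b j = -1" "th a j * th b j = - sg j"
    unfolding orientation_def a_def b_def by auto
  moreover have "x a = 1 \<or> x a = -1" "x b = 1 \<or> x b = -1" "x a * x b = sg j"
    using x_sign x_switch ab j unfolding a_def b_def by auto
  ultimately have "th a j * x a + th b j * x b = 0" using ab by auto
  moreover have "((incidence_mat n m ends th)\<^sup>T *\<^sub>v vec n x) $ j = (\<Sum>i\<in>{a, b}. th i j * x i)"
  proof -
    have "((incidence_mat n m ends th)\<^sup>T *\<^sub>v vec n x) $ j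
        = (\<Sum>i\<in>{0..<n}. if i \<in> {a, b} then th i j * x i else 0)"
      using j by (auto simp: incidence_mat_def scalar_prod_def edge_set_def a_def b_def intro!: sum.cong)
    also have "\<dots> = (\<Sum>i\<in>{a, b}. th i j * x i)"
      using ab by (subst sum.inter_restrict[symmetric]) (auto intro: sum.cong)
    finally show ?thesis .
  qed
  ultimately show "((incidence_mat n m ends th)\<^sup>T *\<^sub>v vec n x) $ j = 0\<^sub>v m $ j"
    using ab j by simp
qed (simp add: incidence_mat_def)

lemma balanced_laplacian_eigenvalue_zero:
  assumes sg: "signed_graph n m ends sg" and con: "connected_graph n m ends"
    and th: "orientation m ends sg th" and bal: "balanced n m ends sg"
  shows "eigenvalue (laplacian n m ends sg) 0"
proof -
  obtain x where x_sign: "\<And>v. v < n \<Longrightarrow> x v = 1 \<or> x v = -1"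
    and x_switch: "\<And>j. j < m \<Longrightarrow> x (fst (ends j)) * x (snd (ends j)) = sg j"
    using balanced_switching_function[OF sg con bal] by blast
  define N where "N = incidence_mat n m ends th"
  have N: "N \<in> carrier_mat n m" by (simp add: N_def incidence_mat_def)
  have n: "0 < n" using con unfolding connected_graph_def by simp
  have nonzero: "vec n x \<noteq> 0\<^sub>v n"
    using x_sign[OF n] n by (auto simp: vec_eq_iff)
  have kernel: "N * N\<^sup>T *\<^sub>v vec n x = 0 \<cdot>\<^sub>v vec n x"
  proof -
    have "N * N\<^sup>T *\<^sub>v vec n x = N *\<^sub>v (N\<^sup>T *\<^sub>v vec n x)"
      using N by (subst assoc_mult_mat_vec[of _ n m _ n]) auto
    also have "\<dots> = N *\<^sub>v 0\<^sub>v m"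
      using incidence_transpose_switching_kernel[OF sg th x_sign x_switch] by (simp add: N_def)
    finally show ?thesis using N by (auto simp: vec_eq_iff)
  qed
  have dim: "dim_row (N * N\<^sup>T) = n" using N by simp
  have "eigenvector (N * N\<^sup>T) (vec n x) 0"
    unfolding eigenvector_def dim by (intro conjI vec_carrier nonzero kernel)
  then have "eigenvalue (N * N\<^sup>T) 0"
    unfolding eigenvalue_def by blast
  then show ?thesis
    unfolding N_def laplacian_eq_incidence_mult_transpose[OF sg th] .
qed

lemma balanced_least_laplacian_eigenvalue:
  assumes sg: "signed_graph n m ends sg" and con: "connected_graph n m ends"
    and th: "orientation m ends sg th" and bal: "balanced n m ends sg"
    and len: "length mu = n" and sorted: "sorted_wrt (\<ge>) mu"
    and spec: "spectrum_mset (laplacian n m ends sg) (mset mu)"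
  shows "mu ! (n - 1) = 0"
proof -
  have n: "0 < n" using con unfolding connected_graph_def by simp
  have "laplacian n m ends sg \<in> carrier_mat n n"
    unfolding laplacian_def adj_matrix_def by (rule minus_carrier_mat) simp
  then have "poly (char_poly (laplacian n m ends sg)) 0 = 0"
    using balanced_laplacian_eigenvalue_zero[OF sg con th bal] eigenvalue_root_char_poly by blast
  then have "(\<Prod>i<n. 0 - mu ! i) = 0"
    using spec unfolding spectrum_mset_def by (simp only: poly_prod_mset_linear_factors len)
  then have "\<exists>i\<in>{..<n}. 0 - mu ! i = 0" by (simp only: prod_zero_iff finite_lessThan)
  then obtain i where i: "i < n" "mu ! i = 0" by auto
  have "mu ! (n - 1) \<le> mu ! i"
  proof (cases "i = n - 1")
    case False
    then have "i < n - 1" using i by simp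
    then show ?thesis using sorted_wrt_nth_less[OF sorted, of i "n - 1"] len n by simp
  qed simp
  moreover have "mu ! (n - 1) \<ge> 0"
    using laplacian_spectrum_nonneg[OF sg th spec] len n by simp
  ultimately show ?thesis using i by simp
qed

section \<open>The adjacency matrix of S_p^k\<close>

lemma sum_mod_periodic:
  fixes f :: "nat \<Rightarrow> 'a :: semiring_1"
  shows "(\<Sum>y<q * m. f (y mod m)) = of_nat q * (\<Sum>j<m. f j)"
proof (induction q)
  case (Suc q)
  have "(\<Sum>y<Suc q * m. f (y mod m)) = (\<Sum>y<q * m. f (y mod m)) + (\<Sum>y=q * m..<q * m + m. f (y mod m))"
    by (simp add: add.commute lessThan_atLeast0 sum.atLeastLessThan_concat)
  also have "(\<Sum>y=q * m..<q * m + m. f (y mod m)) = (\<Sum>j<m. f j)"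
    using sum.shift_bounds_nat_ivl[of "\<lambda>y. f (y mod m)" 0 "q * m" m]
    by (simp add: lessThan_atLeast0 add.commute)
  finally show ?case using Suc by (simp add: algebra_simps)
qed simp

definition tile_mat :: "nat \<Rightarrow> nat \<Rightarrow> 'a mat \<Rightarrow> 'a mat" where
  "tile_mat q r N = mat (q * dim_row N) (r * dim_col N) (\<lambda>(a, b). N $$ (a mod dim_row N, b mod dim_col N))"

lemma tile_mat_carrier: "N \<in> carrier_mat n m \<Longrightarrow> tile_mat q r N \<in> carrier_mat (q * n) (r * m)"
  by (simp add: tile_mat_def)

lemma tile_mat_mult_transpose:
  fixes N :: "'a :: comm_ring_1 mat"
  assumes N: "N \<in> carrier_mat n m"
  shows "tile_mat q r N * (tile_mat q r N)\<^sup>T = tile_mat q 1 (1\<^sub>m n) * (of_nat r \<cdot>\<^sub>m tile_mat 1 q (N * N\<^sup>T))"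
proof (rule eq_matI)
  fix a b assume "a < dim_row (tile_mat q 1 (1\<^sub>m n) * (of_nat r \<cdot>\<^sub>m tile_mat 1 q (N * N\<^sup>T)))"
    and "b < dim_col (tile_mat q 1 (1\<^sub>m n) * (of_nat r \<cdot>\<^sub>m tile_mat 1 q (N * N\<^sup>T)))"
  then have a: "a < q * n" and b: "b < q * n" using N by (auto simp: tile_mat_def)
  define L where "L = N * N\<^sup>T"
  have L: "L \<in> carrier_mat n n" using N by (simp add: L_def)
  have "0 < n" using a by (cases n) auto
  then have n: "a mod n < n" "b mod n < n" by simp_all
  have "(tile_mat q r N * (tile_mat q r N)\<^sup>T) $$ (a, b)
      = (\<Sum>y<r * m. N $$ (a mod n, y mod m) * N $$ (b mod n, y mod m))"
    using a b N by (simp add: tile_mat_def scalar_prod_def lessThan_atLeast0)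
  also have "\<dots> = of_nat r * (\<Sum>j<m. N $$ (a mod n, j) * N $$ (b mod n, j))"
    by (rule sum_mod_periodic)
  also have "\<dots> = of_nat r * L $$ (a mod n, b mod n)"
    using n N by (simp add: L_def scalar_prod_def lessThan_atLeast0)
  also have "\<dots> = (tile_mat q 1 (1\<^sub>m n) * (of_nat r \<cdot>\<^sub>m tile_mat 1 q L)) $$ (a, b)"
    using a b n L by (simp add: tile_mat_def scalar_prod_def lessThan_atLeast0
        if_distrib[of "\<lambda>z. z * _"] cong: if_cong)
  finally show "(tile_mat q r N * (tile_mat q r N)\<^sup>T) $$ (a, b)
      = (tile_mat q 1 (1\<^sub>m n) * (of_nat r \<cdot>\<^sub>m tile_mat 1 q (N * N\<^sup>T))) $$ (a, b)"
    by (simp only: L_def)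
qed (use N in \<open>auto simp: tile_mat_def\<close>)

lemma smult_tile_mat_mult_tile_id:
  fixes L :: "'a :: comm_ring_1 mat"
  assumes L: "L \<in> carrier_mat n n"
  shows "(of_nat r \<cdot>\<^sub>m tile_mat 1 q L) * tile_mat q 1 (1\<^sub>m n) = of_nat (q * r) \<cdot>\<^sub>m L"
proof (rule eq_matI)
  fix i i' assume "i < dim_row (of_nat (q * r) \<cdot>\<^sub>m L)" "i' < dim_col (of_nat (q * r) \<cdot>\<^sub>m L)"
  then have i: "i < n" and i': "i' < n" using L by auto
  have "((of_nat r \<cdot>\<^sub>m tile_mat 1 q L) * tile_mat q 1 (1\<^sub>m n)) $$ (i, i')
      = (\<Sum>a<q * n. (\<lambda>t. of_nat r * L $$ (i, t) * (if t = i' then 1 else 0)) (a mod n))"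
    using i i' L by (simp add: tile_mat_def scalar_prod_def lessThan_atLeast0)
  also have "\<dots> = of_nat q * (\<Sum>t<n. of_nat r * L $$ (i, t) * (if t = i' then 1 else 0))"
    by (rule sum_mod_periodic)
  also have "\<dots> = (of_nat (q * r) \<cdot>\<^sub>m L) $$ (i, i')"
    using i i' L by (simp add: if_distrib[of "\<lambda>z. _ * z"] cong: if_cong)
  finally show "((of_nat r \<cdot>\<^sub>m tile_mat 1 q L) * tile_mat q 1 (1\<^sub>m n)) $$ (i, i')
      = (of_nat (q * r) \<cdot>\<^sub>m L) $$ (i, i')" .
qed (use L in \<open>auto simp: tile_mat_def\<close>)

lemma poly_char_poly_tile_mat_mult_transpose:
  fixes N :: "'a :: field_char_0 mat"
  assumes N: "N \<in> carrier_mat n m" and char_NN: "char_poly (N * N\<^sup>T) = (\<Prod>a\<in>#mset mu. [:- a, 1:])"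
    and len: "length mu = n" and qr: "0 < q" "0 < r" and y: "y \<noteq> 0"
  shows "y ^ n * poly (char_poly (tile_mat q r N * (tile_mat q r N)\<^sup>T)) y
    = y ^ (q * n) * (\<Prod>i<n. y - of_nat (q * r) * mu ! i)"
proof -
  define L where "L = N * N\<^sup>T"
  define X Y where "X = tile_mat q 1 (1\<^sub>m n :: 'a mat)" and "Y = of_nat r \<cdot>\<^sub>m tile_mat 1 q L"
  have L: "L \<in> carrier_mat n n" using N by (simp add: L_def)
  have X: "X \<in> carrier_mat (q * n) n"
    unfolding X_def using tile_mat_carrier[OF one_carrier_mat[of n], where q = q and r = 1] by simp
  have Y: "Y \<in> carrier_mat n (q * n)"
    unfolding Y_def using tile_mat_carrier[OF L, where q = 1 and r = q] by simp
  have "tile_mat q r N * (tile_mat q r N)\<^sup>T = X * Y"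
    unfolding X_def Y_def L_def by (rule tile_mat_mult_transpose[OF N])
  moreover have "Y * X = of_nat (q * r) \<cdot>\<^sub>m L"
    unfolding X_def Y_def by (rule smult_tile_mat_mult_tile_id[OF L])
  moreover have "of_nat (q * r) \<noteq> (0 :: 'a)" using qr by simp
  ultimately show ?thesis
    using poly_char_poly_mult_commute[OF X Y y] poly_char_poly_smult[OF L char_NN[folded L_def] len] by simp
qed

lemma Spk_adj_eq_four_block:
  fixes n m p k :: nat and ends :: "nat \<Rightarrow> nat \<times> nat" and th :: "nat \<Rightarrow> nat \<Rightarrow> real"
  assumes n: "0 < n"
  defines "B \<equiv> tile_mat (p + 1) (k + 1) (incidence_mat n m ends th)"
  shows "Spk_adj n m ends th p k
    = four_block_mat (0\<^sub>m ((p + 1) * n) ((p + 1) * n)) B B\<^sup>T (0\<^sub>m ((k + 1) * m) ((k + 1) * m))"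
proof (rule eq_matI)
  fix a b assume "a < dim_row (four_block_mat (0\<^sub>m ((p + 1) * n) ((p + 1) * n)) B B\<^sup>T (0\<^sub>m ((k + 1) * m) ((k + 1) * m)))"
    and "b < dim_col (four_block_mat (0\<^sub>m ((p + 1) * n) ((p + 1) * n)) B B\<^sup>T (0\<^sub>m ((k + 1) * m) ((k + 1) * m)))"
  then have a: "a < (p + 1) * n + (k + 1) * m" and b: "b < (p + 1) * n + (k + 1) * m"
    by (auto simp: B_def tile_mat_def incidence_mat_def)
  have "(x - (p + 1) * n) mod m < m" if "x < (p + 1) * n + (k + 1) * m" "\<not> x < (p + 1) * n" for x
    using that by (cases m) auto
  with a b n show "Spk_adj n m ends th p k $$ (a, b)
      = four_block_mat (0\<^sub>m ((p + 1) * n) ((p + 1) * n)) B B\<^sup>T (0\<^sub>m ((k + 1) * m) ((k + 1) * m)) $$ (a, b)"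
    by (auto simp: Spk_adj_def Spk_entry_def B_def tile_mat_def incidence_mat_def Let_def)
qed (auto simp: Spk_adj_def B_def tile_mat_def incidence_mat_def)

lemma poly_char_poly_Spk_adj:
  assumes sg: "signed_graph n m ends sg" and th: "orientation m ends sg th"
    and n: "0 < n" and p: "1 \<le> p" and len: "length mu = n"
    and spec: "spectrum_mset (laplacian n m ends sg) (mset mu)" and x: "x \<noteq> 0"
  shows "poly (char_poly (Spk_adj n m ends th p k)) x
    = x ^ ((p - 1) * n + (k + 1) * m) * (\<Prod>i<n. x\<^sup>2 - real ((p + 1) * (k + 1)) * mu ! i)"
proof -
  define N where "N = incidence_mat n m ends th"
  define B where "B = tile_mat (p + 1) (k + 1) N"
  define r s where "r = (p + 1) * n" and "s = (k + 1) * m"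
  define P where "P = (\<Prod>i<n. x\<^sup>2 - real ((p + 1) * (k + 1)) * mu ! i)"
  have N: "N \<in> carrier_mat n m" by (simp add: N_def incidence_mat_def)
  have B: "B \<in> carrier_mat r s"
    unfolding B_def r_def s_def by (rule tile_mat_carrier[OF N])
  have char_NN: "char_poly (N * N\<^sup>T) = (\<Prod>a\<in>#mset mu. [:- a, 1:])"
    using spec unfolding spectrum_mset_def N_def laplacian_eq_incidence_mult_transpose[OF sg th] .
  have "x ^ r * poly (char_poly (Spk_adj n m ends th p k)) x = x ^ s * poly (char_poly (B * B\<^sup>T)) (x\<^sup>2)"
    unfolding Spk_adj_eq_four_block[OF n] N_def[symmetric] B_def[symmetric] r_def[symmetric] s_def[symmetric]
    using poly_char_poly_bipartite[OF B _ x] B by auto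
  moreover have "(x\<^sup>2) ^ n * poly (char_poly (B * B\<^sup>T)) (x\<^sup>2) = (x\<^sup>2) ^ r * P"
    unfolding B_def r_def P_def
    using poly_char_poly_tile_mat_mult_transpose[OF N char_NN len, of "p + 1" "k + 1" "x\<^sup>2"] x by simp
  ultimately have "x ^ (r + 2 * n) * poly (char_poly (Spk_adj n m ends th p k)) x = x ^ (s + 2 * r) * P"
    by (simp add: power_add mult_ac flip: power_mult) (metis mult.left_commute)
  moreover have "s + 2 * r = (r + 2 * n) + ((p - 1) * n + (k + 1) * m)"
    using p by (simp add: r_def s_def algebra_simps) (cases p; simp add: algebra_simps)
  ultimately show ?thesis
    using x unfolding P_def by (simp add: power_add)
qed

theorem theorem4p4:
  fixes n m p k :: nat and ends :: "nat \<Rightarrow> nat \<times> nat" and sg :: "nat \<Rightarrow> real" and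
    th :: "nat \<Rightarrow> nat \<Rightarrow> real" and mu :: "real list"
  assumes "signed_graph n m ends sg"
    and "connected_graph n m ends"
    and "orientation m ends sg th"
    and "length mu = n" and "sorted_wrt (\<ge>) mu"
    and "spectrum_mset (laplacian n m ends sg) (mset mu)"
    and "p \<ge> 1" and "k = p \<or> k = p - 1"
  shows "spectrum_mset (Spk_adj n m ends th p k)
     (if balanced n m ends sg then
        replicate_mset ((p - 1) * n + (k + 1) * m + 2) 0
        + mset (map (\<lambda>i. sqrt (real ((p + 1) * (k + 1)) * mu ! i)) [0..<n - 1])
        + mset (map (\<lambda>i. - sqrt (real ((p + 1) * (k + 1)) * mu ! i)) [0..<n - 1])
      else
        replicate_mset ((p - 1) * n + (k + 1) * m) 0
        + mset (map (\<lambda>i. sqrt (real ((p + 1) * (k + 1)) * mu ! i)) [0..<n])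
        + mset (map (\<lambda>i. - sqrt (real ((p + 1) * (k + 1)) * mu ! i)) [0..<n]))"
proof -
  note sg = assms(1) and con = assms(2) and th = assms(3) and len = assms(4)
    and sorted = assms(5) and spec = assms(6) and p = assms(7)
  define c where "c = real ((p + 1) * (k + 1))"
  have n: "0 < n" using con unfolding connected_graph_def by simp
  have nonneg: "c * mu ! i \<ge> 0" if "i < n" for i
    using laplacian_spectrum_nonneg[OF sg th spec] that len by (simp add: c_def)
  note char_Spk = poly_char_poly_Spk_adj[OF sg th n p len spec, where k = k, folded c_def]
  show ?thesis
  proof (cases "balanced n m ends sg")
    case True
    have "mu ! (n - 1) = 0"
      by (rule balanced_least_laplacian_eigenvalue[OF sg con th True len sorted spec])
    then have "(\<Prod>i<n. x\<^sup>2 - c * mu ! i) = x\<^sup>2 * (\<Prod>i<n - 1. x\<^sup>2 - c * mu ! i)" for x :: real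
      using n prod.lessThan_Suc[of "\<lambda>i. x\<^sup>2 - c * mu ! i" "n - 1"] by simp
    then have "poly (char_poly (Spk_adj n m ends th p k)) x
        = x ^ ((p - 1) * n + (k + 1) * m + 2) * (\<Prod>i<n - 1. x\<^sup>2 - c * mu ! i)" if "x \<noteq> 0" for x
      using char_Spk[OF that] by (simp only: power_add mult_ac)
    then show ?thesis
      unfolding if_P[OF True] c_def[symmetric] using nonneg by (intro spectrum_mset_pm_sqrtI) auto
  next
    case False
    show ?thesis
      unfolding if_not_P[OF False] c_def[symmetric] using nonneg char_Spk by (intro spectrum_mset_pm_sqrtI) auto
  qed
qed

end
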